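(* Let $G$ be a group, $C$ a subgroup of $G$, and $\tau\colon G\to(2\mathbb{Z}+1)\cup\{0\}$ an ordering quasi-morphism with kernel $C$. Then $P=\{(g,n)\in G\times\mathbb{Z}:\tau(g)+2n>0\}$ is a positive cone relative to $C\times\{0\}$ for $G\times\mathbb{Z}$.
   Context: An ordering quasi-morphism is a function $\tau\colon G\to\mathbb{Z}$ such that (i) $C=\{g:\tau(g)=0\}$ is a subgroup of $G$ (called the kernel), (ii) $\tau(g^{-1})=-\tau(g)$ for all $g$, (iii) $\tau(g)+\tau(h)+\tau((gh)^{-1})\le1$ for all $g,h\in G$. For a group $H$ and subgroup $K$, a positive cone relative to $K$ is a subsemigroup $P\subseteq H$ with $H=P\sqcup K\sqcup P^{-1}$ (disjoint union). *)

theory Defs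
  imports "HOL-Algebra.Algebra"
begin

definition ordering_quasi_morphism :: "('a, 'b) monoid_scheme \<Rightarrow> ('a \<Rightarrow> int) \<Rightarrow> bool" where
  "ordering_quasi_morphism G \<tau> \<longleftrightarrow>
     subgroup {g \<in> carrier G. \<tau> g = 0} G
   \<and> (\<forall>g \<in> carrier G. \<tau> (inv\<^bsub>G\<^esub> g) = - \<tau> g)
   \<and> (\<forall>g \<in> carrier G. \<forall>h \<in> carrier G.
        \<tau> g + \<tau> h + \<tau> (inv\<^bsub>G\<^esub> (g \<otimes>\<^bsub>G\<^esub> h)) \<le> 1)"

definition oqm_kernel :: "('a, 'b) monoid_scheme \<Rightarrow> ('a \<Rightarrow> int) \<Rightarrow> 'a set" where
  "oqm_kernel G \<tau> = {g \<in> carrier G. \<tau> g = 0}"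

definition relative_positive_cone :: "('a, 'b) monoid_scheme \<Rightarrow> 'a set \<Rightarrow> 'a set \<Rightarrow> bool" where
  "relative_positive_cone H K P \<longleftrightarrow>
     P \<subseteq> carrier H
   \<and> (\<forall>x \<in> P. \<forall>y \<in> P. x \<otimes>\<^bsub>H\<^esub> y \<in> P)
   \<and> carrier H = P \<union> K \<union> set_inv\<^bsub>H\<^esub> P
   \<and> P \<inter> K = {} \<and> P \<inter> set_inv\<^bsub>H\<^esub> P = {} \<and> K \<inter> set_inv\<^bsub>H\<^esub> P = {}"

end

theory Submission
  imports Defs
begin

text \<open>Quasi-additivity gives \<open>\<tau>(gh) \<ge> \<tau> g + \<tau> h - 1\<close>, so the half-open condition
  \<open>\<tau> g + 2n \<ge> 1\<close> is stable under products, and \<open>\<tau>(g\<inverse>) = -\<tau> g\<close> turns the inverse cone into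
  \<open>\<tau> g + 2n < 0\<close>. What remains is the locus \<open>\<tau> g + 2n = 0\<close>; since \<open>\<tau>\<close> takes only odd values
  off its kernel, parity forces \<open>\<tau> g = 0\<close> and \<open>n = 0\<close> there, i.e. it is exactly \<open>C \<times> {0}\<close>.\<close>

lemma ordering_quasi_morphism_inv:
  assumes "ordering_quasi_morphism G \<tau>" and "g \<in> carrier G"
  shows "\<tau> (inv\<^bsub>G\<^esub> g) = - \<tau> g"
  using assms unfolding ordering_quasi_morphism_def by blast

lemma ordering_quasi_morphism_mult_lower_bound:
  assumes "group G" and "ordering_quasi_morphism G \<tau>"
    and "g \<in> carrier G" and "h \<in> carrier G"
  shows "\<tau> g + \<tau> h - 1 \<le> \<tau> (g \<otimes>\<^bsub>G\<^esub> h)"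
proof -
  have "\<tau> g + \<tau> h + \<tau> (inv\<^bsub>G\<^esub> (g \<otimes>\<^bsub>G\<^esub> h)) \<le> 1"
    using assms(2-4) unfolding ordering_quasi_morphism_def by blast
  moreover have "\<tau> (inv\<^bsub>G\<^esub> (g \<otimes>\<^bsub>G\<^esub> h)) = - \<tau> (g \<otimes>\<^bsub>G\<^esub> h)"
    using assms by (simp add: ordering_quasi_morphism_inv group.is_monoid monoid.m_closed)
  ultimately show ?thesis by linarith
qed

definition oqm_cone :: "('a, 'b) monoid_scheme \<Rightarrow> ('a \<Rightarrow> int) \<Rightarrow> ('a \<times> int) set" where
  "oqm_cone G \<tau> = {(g, n). g \<in> carrier G \<and> \<tau> g + 2 * n > 0}"

lemma oqm_cone_mult_closed:
  assumes "group G" and "ordering_quasi_morphism G \<tau>"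
    and "x \<in> oqm_cone G \<tau>" and "y \<in> oqm_cone G \<tau>"
  shows "x \<otimes>\<^bsub>G \<times>\<times> integer_group\<^esub> y \<in> oqm_cone G \<tau>"
proof -
  obtain g n h m where "x = (g, n)" "y = (h, m)" "g \<in> carrier G" "h \<in> carrier G"
    "\<tau> g + 2 * n \<ge> 1" "\<tau> h + 2 * m \<ge> 1"
    using assms(3,4) unfolding oqm_cone_def by auto
  with ordering_quasi_morphism_mult_lower_bound[OF assms(1,2)] show ?thesis
    unfolding oqm_cone_def by (force simp: group.is_monoid monoid.m_closed assms(1))
qed

lemma set_inv_oqm_cone:
  assumes "group G" and "ordering_quasi_morphism G \<tau>"
  shows "set_inv\<^bsub>G \<times>\<times> integer_group\<^esub> (oqm_cone G \<tau>) =
    {(g, n). g \<in> carrier G \<and> \<tau> g + 2 * n < 0}"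
proof -
  have inv_pair: "inv\<^bsub>G \<times>\<times> integer_group\<^esub> (g, n) = (inv\<^bsub>G\<^esub> g, - n)" if "g \<in> carrier G" for g n
    using inv_DirProd[OF assms(1) group_integer_group] that by simp
  have "(g, n) \<in> set_inv\<^bsub>G \<times>\<times> integer_group\<^esub> (oqm_cone G \<tau>) \<longleftrightarrow>
      g \<in> carrier G \<and> \<tau> g + 2 * n < 0" for g n
  proof
    assume "(g, n) \<in> set_inv\<^bsub>G \<times>\<times> integer_group\<^esub> (oqm_cone G \<tau>)"
    then obtain h m where "(g, n) = inv\<^bsub>G \<times>\<times> integer_group\<^esub> (h, m)"
      and "h \<in> carrier G" and "\<tau> h + 2 * m > 0"
      unfolding SET_INV_def oqm_cone_def by auto
    then show "g \<in> carrier G \<and> \<tau> g + 2 * n < 0"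
      using inv_pair ordering_quasi_morphism_inv[OF assms(2)] assms(1) by auto
  next
    assume g: "g \<in> carrier G \<and> \<tau> g + 2 * n < 0"
    then have "(inv\<^bsub>G\<^esub> g, - n) \<in> oqm_cone G \<tau>"
      using ordering_quasi_morphism_inv[OF assms(2)] assms(1) by (auto simp: oqm_cone_def)
    moreover have "(g, n) = inv\<^bsub>G \<times>\<times> integer_group\<^esub> (inv\<^bsub>G\<^esub> g, - n)"
      using g inv_pair assms(1) by simp
    ultimately show "(g, n) \<in> set_inv\<^bsub>G \<times>\<times> integer_group\<^esub> (oqm_cone G \<tau>)"
      unfolding SET_INV_def by blast
  qed
  then show ?thesis by auto
qed

lemma odd_or_zero_add_double_eq_0:
  fixes t n :: int
  assumes "t = 0 \<or> odd t" and "t + 2 * n = 0"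
  shows "t = 0 \<and> n = 0"
proof -
  have "even t" using assms(2) by (metis dvd_triv_left dvd_minus_iff add_eq_0_iff)
  with assms show ?thesis by auto
qed

theorem proposition5p11:
  fixes G (structure) and C :: "'a set" and \<tau> :: "'a \<Rightarrow> int"
  assumes "group G"
    and "subgroup C G"
    and "ordering_quasi_morphism G \<tau>"
    and "oqm_kernel G \<tau> = C"
    and "\<forall>g \<in> carrier G. \<tau> g = 0 \<or> odd (\<tau> g)"
  shows "relative_positive_cone (G \<times>\<times> integer_group) (C \<times> {0})
           {(g, n). g \<in> carrier G \<and> \<tau> g + 2 * n > 0}"
proof -
  have C: "C = {g \<in> carrier G. \<tau> g = 0}"
    using assms(4) unfolding oqm_kernel_def by simp
  have trichotomy: "\<tau> g + 2 * n > 0 \<or> (\<tau> g = 0 \<and> n = 0) \<or> \<tau> g + 2 * n < 0"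
    if "g \<in> carrier G" for g n
    using odd_or_zero_add_double_eq_0[of "\<tau> g" n] assms(5) that by force
  show ?thesis
    unfolding relative_positive_cone_def oqm_cone_def[symmetric] set_inv_oqm_cone[OF assms(1,3)]
    using trichotomy oqm_cone_mult_closed[OF assms(1,3)] by (auto simp: oqm_cone_def C)
qed

end
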